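(* Let $C\subseteq\mathbb{F}_q^n$ be a linear code and $(A,B)$ a $2$-power $t$-error locating pair for $C$. Let $\mathbf{y}=\mathbf{c}+\mathbf{e}$ with $\mathbf{c}\in C$, $\mathrm{w}(\mathbf{e})=t$, $I_{\mathbf{e}}=\mathrm{supp}(\mathbf{e})$, and set $\mathbf{e}^{(1)}=\mathbf{e}$, $\mathbf{e}^{(2)}=\mathbf{y}^2-\mathbf{c}^2$. Let $M=M_1\cap M_2$ with $M_1=\{\mathbf{a}\in A\mid \langle \mathbf{a}*\mathbf{y},\mathbf{b}\rangle=0\ \forall \mathbf{b}\in B\}$, $M_2=\{\mathbf{a}\in A\mid \langle \mathbf{a}*\mathbf{y}^2,\mathbf{v}\rangle=0\ \forall \mathbf{v}\in (B^{\perp}*C)^{\perp}\}$. Then $$M_{I_{\mathbf{e}}}=A_{I_{\mathbf{e}}}\cap \big((\mathbf{e}^{(1)}*B)_{I_{\mathbf{e}}}\big)^{\perp}\cap \big((\mathbf{e}^{(2)}*(B^\perp*C)^\perp)_{I_{\mathbf{e}}}\big)^{\perp},$$ where the duals are taken in $\mathbb{F}_q^{|I_{\mathbf{e}}|}$.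
   Context: All codes are $\mathbb{F}_q$-linear subspaces of $\mathbb{F}_q^n$. $\mathbf{u}*\mathbf{v}=(u_1v_1,\dots,u_nv_n)$, $\mathbf{u}^i=(u_1^i,\dots,u_n^i)$; $A*B$ is the span of all $\mathbf{a}*\mathbf{b}$; for a vector $\mathbf{u}$ and code $X$, $\mathbf{u}*X=\{\mathbf{u}*\mathbf{x}:\mathbf{x}\in X\}$; $\langle\mathbf{u},\mathbf{v}\rangle=\sum_iu_iv_i$, $X^\perp$ the dual. $\mathrm{w}$ Hamming weight, $\mathrm{d}$ minimum distance, $\mathrm{supp}(\mathbf{x})=\{i:x_i\ne0\}$. For $J=\{j_1<\dots<j_s\}$, $X_J=\{(x_{j_1},\dots,x_{j_s}):\mathbf{x}\in X\}$ (puncturing keeping coordinates in $J$). A pair $(A,B)$ is a $2$-power $t$-error locating pair for $C$ if: (1) $A*B\subseteq C^\perp$; (2) $\dim A>t$; (3) $\mathrm{d}(A^\perp)>t$; (4) $\mathrm{d}(A)+\mathrm{d}(C)>n$; (5) $\dim B+\dim (B^\perp*C)^\perp\ge t$. *)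

theory Defs
  imports Main
begin

text \<open>Vectors of F_q^n are modelled as functions nat => 'a vanishing outside {0..<n}.\<close>

definition vecs :: "nat \<Rightarrow> (nat \<Rightarrow> 'a::field) set" where
  "vecs n = {x. \<forall>i\<ge>n. x i = 0}"

definition is_code :: "nat \<Rightarrow> (nat \<Rightarrow> 'a::field) set \<Rightarrow> bool" where
  "is_code n X \<longleftrightarrow> X \<subseteq> vecs n \<and> (\<lambda>_. 0) \<in> X \<and>
     (\<forall>x\<in>X. \<forall>y\<in>X. (\<lambda>i. x i + y i) \<in> X) \<and>
     (\<forall>c. \<forall>x\<in>X. (\<lambda>i. c * x i) \<in> X)"

definition code_span :: "nat \<Rightarrow> (nat \<Rightarrow> 'a::field) set \<Rightarrow> (nat \<Rightarrow> 'a) set" where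
  "code_span n S = \<Inter>{X. is_code n X \<and> S \<subseteq> X}"

definition code_dim :: "nat \<Rightarrow> (nat \<Rightarrow> 'a::field) set \<Rightarrow> nat" where
  "code_dim n X = (LEAST k. \<exists>S. finite S \<and> card S = k \<and> S \<subseteq> X \<and> code_span n S = X)"

definition vmult :: "(nat \<Rightarrow> 'a::field) \<Rightarrow> (nat \<Rightarrow> 'a) \<Rightarrow> (nat \<Rightarrow> 'a)" where
  "vmult u v = (\<lambda>i. u i * v i)"

definition vscale :: "(nat \<Rightarrow> 'a::field) \<Rightarrow> (nat \<Rightarrow> 'a) set \<Rightarrow> (nat \<Rightarrow> 'a) set" where
  "vscale u X = vmult u ` X"

definition star :: "nat \<Rightarrow> (nat \<Rightarrow> 'a::field) set \<Rightarrow> (nat \<Rightarrow> 'a) set \<Rightarrow> (nat \<Rightarrow> 'a) set" where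
  "star n A B = code_span n {vmult a b | a b. a \<in> A \<and> b \<in> B}"

definition inner :: "nat \<Rightarrow> (nat \<Rightarrow> 'a::field) \<Rightarrow> (nat \<Rightarrow> 'a) \<Rightarrow> 'a" where
  "inner n u v = (\<Sum>i<n. u i * v i)"

definition dual :: "nat \<Rightarrow> (nat \<Rightarrow> 'a::field) set \<Rightarrow> (nat \<Rightarrow> 'a) set" where
  "dual n X = {y \<in> vecs n. \<forall>x\<in>X. inner n x y = 0}"

definition supp :: "nat \<Rightarrow> (nat \<Rightarrow> 'a::field) \<Rightarrow> nat set" where
  "supp n x = {i. i < n \<and> x i \<noteq> 0}"

definition wt :: "nat \<Rightarrow> (nat \<Rightarrow> 'a::field) \<Rightarrow> nat" where
  "wt n x = card (supp n x)"

text \<open>Minimum distance; for the zero code we use the convention d = n+1 (acting as infinity).\<close>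
definition mindist :: "nat \<Rightarrow> (nat \<Rightarrow> 'a::field) set \<Rightarrow> nat" where
  "mindist n X = (if X - {\<lambda>_. 0} = {} then n + 1
                  else Min (wt n ` (X - {\<lambda>_. 0})))"

text \<open>Puncturing X_J: keep coordinates j_1 < ... < j_s of J, reindexed to 0..<s.\<close>
definition punct :: "nat set \<Rightarrow> (nat \<Rightarrow> 'a::field) \<Rightarrow> (nat \<Rightarrow> 'a)" where
  "punct J x = (\<lambda>i. if i < card J then x (sorted_list_of_set J ! i) else 0)"

definition punct_code :: "nat set \<Rightarrow> (nat \<Rightarrow> 'a::field) set \<Rightarrow> (nat \<Rightarrow> 'a) set" where
  "punct_code J X = punct J ` X"

definition two_power_ELP ::
  "nat \<Rightarrow> (nat \<Rightarrow> 'a::field) set \<Rightarrow> (nat \<Rightarrow> 'a) set \<Rightarrow> (nat \<Rightarrow> 'a) set \<Rightarrow> nat \<Rightarrow> bool" where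
  "two_power_ELP n C A B t \<longleftrightarrow>
     is_code n A \<and> is_code n B \<and>
     star n A B \<subseteq> dual n C \<and>
     code_dim n A > t \<and>
     mindist n (dual n A) > t \<and>
     mindist n A + mindist n C > n \<and>
     code_dim n B + code_dim n (dual n (star n (dual n B) C)) \<ge> t"

end

theory Submission
  imports Defs
begin

text \<open>
  For \<open>a \<in> A\<close> the codeword contributes nothing to either syndrome:
  \<open>\<langle>a * c, b\<rangle> = \<langle>a * b, c\<rangle> = 0\<close> because \<open>A * B \<subseteq> C\<^sup>\<perp>\<close>, and \<open>\<langle>a * c\<^sup>2, v\<rangle> = 0\<close> because
  \<open>a * c \<in> B\<^sup>\<perp>\<close>, so \<open>a * c\<^sup>2 \<in> B\<^sup>\<perp> * C\<close>. Hence \<open>\<langle>a * y, b\<rangle> = \<langle>e * b, a\<rangle>\<close> and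
  \<open>\<langle>a * y\<^sup>2, v\<rangle> = \<langle>e\<^sub>2 * v, a\<rangle>\<close> with \<open>e\<^sub>2 = y\<^sup>2 - c\<^sup>2\<close>. Both error vectors vanish
  outside \<open>I\<^sub>e\<close>, so the conditions defining \<open>M\<close> depend only on the restriction of \<open>a\<close>
  to \<open>I\<^sub>e\<close>, where they say exactly that it is orthogonal to the punctured codes; such
  conditions commute with puncturing.
\<close>

lemma inner_commute: "inner n u v = inner n v u"
  unfolding inner_def by (simp add: mult.commute)

lemma inner_vmult_swap: "inner n (vmult a b) c = inner n (vmult a c) b"
  unfolding inner_def vmult_def by (simp add: mult_ac)

lemma inner_vmult_split:
  "inner n (vmult a y) b = inner n (vmult a c) b + inner n (vmult (\<lambda>i. y i - c i) b) a"
  unfolding inner_def vmult_def by (simp add: sum.distrib[symmetric] algebra_simps)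

lemma vmult_mem_star: "a \<in> A \<Longrightarrow> b \<in> B \<Longrightarrow> vmult a b \<in> star n A B"
  unfolding star_def code_span_def by blast

lemma vecs_vmult_right: "c \<in> vecs n \<Longrightarrow> vmult a c \<in> vecs n"
  unfolding vecs_def vmult_def by simp

lemma inner_vmult_eq_0_if_star_subset_dual:
  assumes "star n A B \<subseteq> dual n C" "a \<in> A" "b \<in> B" "c \<in> C"
  shows "inner n (vmult a c) b = 0"
proof -
  have "vmult a b \<in> dual n C"
    using assms vmult_mem_star by blast
  then have "inner n c (vmult a b) = 0"
    using \<open>c \<in> C\<close> by (simp add: dual_def)
  then show ?thesis
    by (simp add: inner_commute[of n c] inner_vmult_swap)
qed

lemma vmult_mem_dual_if_star_subset_dual:
  assumes "star n A B \<subseteq> dual n C" "C \<subseteq> vecs n" "a \<in> A" "c \<in> C"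
  shows "vmult a c \<in> dual n B"
  using assms inner_vmult_eq_0_if_star_subset_dual[OF assms(1,3) _ assms(4)]
  by (auto simp: dual_def vecs_vmult_right inner_commute)

lemma inner_vmult_square_eq_0_if_star_subset_dual:
  assumes "star n A B \<subseteq> dual n C" "C \<subseteq> vecs n" "a \<in> A" "c \<in> C"
    and "v \<in> dual n (star n (dual n B) C)"
  shows "inner n (vmult a (vmult c c)) v = 0"
proof -
  have "vmult (vmult a c) c \<in> star n (dual n B) C"
    using vmult_mem_star vmult_mem_dual_if_star_subset_dual[OF assms(1-4)] \<open>c \<in> C\<close> .
  moreover have "vmult a (vmult c c) = vmult (vmult a c) c"
    unfolding vmult_def by (simp add: mult.assoc)
  ultimately show ?thesis
    using \<open>v \<in> _\<close> unfolding dual_def by simp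
qed

lemma vecs_outside_supp: "x \<in> vecs n \<Longrightarrow> i \<notin> supp n x \<Longrightarrow> x i = 0"
  unfolding vecs_def supp_def by (metis (mono_tags) mem_Collect_eq not_le)

lemma punct_mem_vecs: "punct I x \<in> vecs (card I)"
  unfolding punct_def vecs_def by simp

lemma inner_eq_inner_punct:
  assumes I: "I \<subseteq> {..<n}" and z: "\<And>i. i \<notin> I \<Longrightarrow> z i = 0"
  shows "inner n z a = inner (card I) (punct I z) (punct I a)"
proof -
  have "finite I"
    using I finite_subset by blast
  define s where "s = sorted_list_of_set I"
  have s_nth: "bij_betw (\<lambda>j. s ! j) {..<card I} I"
    using \<open>finite I\<close> unfolding s_def
    by (metis atLeast0LessThan bij_betw_nth distinct_sorted_list_of_set
        length_sorted_list_of_set set_sorted_list_of_set)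
  have "inner n z a = (\<Sum>i\<in>I. z i * a i)"
    unfolding inner_def by (rule sum.mono_neutral_right) (use I z in auto)
  also have "\<dots> = (\<Sum>j<card I. z (s ! j) * a (s ! j))"
    using sum.reindex_bij_betw[OF s_nth, of "\<lambda>i. z i * a i"] by simp
  also have "\<dots> = inner (card I) (punct I z) (punct I a)"
    unfolding inner_def punct_def s_def by simp
  finally show ?thesis .
qed

lemma punct_mem_dual_punct_vscale_iff:
  assumes "I \<subseteq> {..<n}" and "\<And>i. i \<notin> I \<Longrightarrow> w i = 0"
  shows "punct I a \<in> dual (card I) (punct_code I (vscale w X))
    \<longleftrightarrow> (\<forall>x\<in>X. inner n (vmult w x) a = 0)"
proof -
  have "inner n (vmult w x) a = inner (card I) (punct I (vmult w x)) (punct I a)" for x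
    by (rule inner_eq_inner_punct) (use assms in \<open>auto simp: vmult_def\<close>)
  then show ?thesis
    by (auto simp: dual_def punct_code_def vscale_def punct_mem_vecs)
qed

lemma punct_code_Collect_punct_mem:
  "punct_code I {a \<in> A. punct I a \<in> S} = punct_code I A \<inter> S"
  unfolding punct_code_def by blast

theorem theorem3p8:
  fixes n t :: nat
    and C A B :: "(nat \<Rightarrow> 'a::{finite,field}) set"
    and c e y :: "nat \<Rightarrow> 'a"
  assumes "is_code n C"
    and "two_power_ELP n C A B t"
    and "c \<in> C" and "e \<in> vecs n" and "wt n e = t"
    and "y = (\<lambda>i. c i + e i)"
  shows
    "let I = supp n e; k = card I;
         e1 = e; e2 = (\<lambda>i. vmult y y i - vmult c c i);
         V = dual n (star n (dual n B) C);
         M1 = {a \<in> A. \<forall>b\<in>B. inner n (vmult a y) b = 0};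
         M2 = {a \<in> A. \<forall>v\<in>V. inner n (vmult a (vmult y y)) v = 0};
         M = M1 \<inter> M2
     in punct_code I M =
        punct_code I A \<inter> dual k (punct_code I (vscale e1 B))
                       \<inter> dual k (punct_code I (vscale e2 V))"
proof -
  define I where "I = supp n e"
  define e2 where "e2 = (\<lambda>i. vmult y y i - vmult c c i)"
  define V where "V = dual n (star n (dual n B) C)"
  have star_orth: "star n A B \<subseteq> dual n C" and C_vecs: "C \<subseteq> vecs n"
    using assms(1,2) unfolding two_power_ELP_def is_code_def by auto
  have I_sub: "I \<subseteq> {..<n}"
    unfolding I_def supp_def by auto
  have e_outside: "e i = 0" and e2_outside: "e2 i = 0" if "i \<notin> I" for i
    using vecs_outside_supp[OF assms(4)] that
    by (auto simp: I_def e2_def vmult_def assms(6))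
  have syndrome1: "(\<forall>b\<in>B. inner n (vmult a y) b = 0) \<longleftrightarrow>
      punct I a \<in> dual (card I) (punct_code I (vscale e B))" if "a \<in> A" for a
    using inner_vmult_split[of n a y _ c] assms(6)
      inner_vmult_eq_0_if_star_subset_dual[OF star_orth that _ assms(3)]
      punct_mem_dual_punct_vscale_iff[OF I_sub e_outside]
    by (simp add: inner_commute[of n _ a])
  have syndrome2: "(\<forall>v\<in>V. inner n (vmult a (vmult y y)) v = 0) \<longleftrightarrow>
      punct I a \<in> dual (card I) (punct_code I (vscale e2 V))" if "a \<in> A" for a
    using inner_vmult_split[of n a "vmult y y" _ "vmult c c"]
      inner_vmult_square_eq_0_if_star_subset_dual[OF star_orth C_vecs that assms(3)]
      punct_mem_dual_punct_vscale_iff[OF I_sub e2_outside]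
    unfolding V_def e2_def by (simp add: inner_commute[of n _ a])
  have "{a \<in> A. \<forall>b\<in>B. inner n (vmult a y) b = 0} \<inter>
      {a \<in> A. \<forall>v\<in>V. inner n (vmult a (vmult y y)) v = 0} =
      {a \<in> A. punct I a \<in> dual (card I) (punct_code I (vscale e B))
        \<inter> dual (card I) (punct_code I (vscale e2 V))}"
    using syndrome1 syndrome2 by blast
  then show ?thesis
    unfolding Let_def I_def[symmetric] e2_def[symmetric] V_def[symmetric]
    by (simp only: punct_code_Collect_punct_mem Int_assoc)
qed

end
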